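(* Suppose conditions (i)–(iii) of the context hold. Let $p\in\mathbb{N}$, $t\in[0,1]$, $g\in H$, and let $\widetilde Y(t):=Q_{h,k}^\beta\Pi_hg+Q_{h,k}^\beta P_h^\beta W^\beta(t)$ (the strong solution of $\mathrm{d}\widetilde Y(t)=Q_{h,k}^\beta P_h^\beta\,\mathrm{d}W^\beta(t)$, $\widetilde Y(0)=Q_{h,k}^\beta\Pi_hg$). Then the $p$-th moment of $\widetilde Y(t)$ exists, and for $p\ge2$ there exist $k_0>0$ and a constant $C>0$, independent of $h$ and $k$, such that for all sufficiently small $h\in(0,h_0)$ and $k\in(0,k_0)$, \[ \mathbb{E}\bigl[\|\widetilde Y(t)\|_H^p\bigr]\le C\bigl(1+e^{-p\pi^2/(2k)}h^{-pd/2}+\|g\|_H^p\bigr). \]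
   Context: $H$ separable real Hilbert space; $L\colon\mathscr{D}(L)\subset H\to H$ densely defined, self-adjoint, positive definite with compact inverse, $H$-orthonormal eigenvectors $\{e_j\}$, nondecreasing eigenvalues $\{\lambda_j\}$ with $c_\lambda j^\alpha\le\lambda_j\le C_\lambda j^\alpha$ ($\alpha,c_\lambda,C_\lambda>0$); $\beta\in(0,1)$. $(V_h)_{h\in(0,1)}$ finite-dimensional subspaces of $\mathscr{D}(L^{1/2})$, $N_h=\dim V_h$, $\Pi_h$ the $H$-orthogonal projection onto $V_h$, $L_h\colon V_h\to V_h$ with $(L_h\psi_h,\phi_h)_H=\langle L\psi_h,\phi_h\rangle$, $H$-orthonormal eigenvectors $\{e_{j,h}\}_{j=1}^{N_h}$, nondecreasing eigenvalues $\{\lambda_{j,h}\}$. $P_h^\beta\colon H\to V_h$, $P_h^\beta g:=\sum_{j=1}^{N_h}\lambda_j^\beta(g,e_j)_He_{j,h}$. For $k>0$, $y_\ell=\ell k$, $K^-=\lceil\pi^2/(4\beta k^2)\rceil$, $K^+=\lceil\pi^2/(4(1-\beta)k^2)\rceil$, $Q_{h,k}^\beta:=\frac{2k\sin(\pi\beta)}{\pi}\sum_{\ell=-K^-}^{K^+}e^{2\beta y_\ell}(\mathrm{Id}_{V_h}+e^{2y_\ell}L_h)^{-1}$. $\{B_j\}$ independent standard Brownian motions, $W^\beta(t):=\sum_j\lambda_j^{-\beta}B_j(t)e_j$. Conditions: (i) there is $d\in\mathbb{N}$ with $N_h\propto h^{-d}$; (ii) there are $C_1,C_2>0$, $h_0\in(0,1)$,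 $r,s>0$, $q>1$ with $\lambda_j\le\lambda_{j,h}\le\lambda_j+C_1h^r\lambda_j^q$ and $\|e_j-e_{j,h}\|_H^2\le C_2h^{2s}\lambda_j^q$ for all $h\in(0,h_0)$, $j\le N_h$; (iii) $\frac1{2\beta}<\alpha\le\min\{\frac{r}{(q-1)d},\frac{2s}{qd}\}$. *)

theory Defs
  imports "HOL-Probability.Probability"
begin

text \<open>Spectral data of L: H-orthonormal eigenvectors e j and eigenvalues lam j,
  indexed by j >= 1 (index 0 unused).\<close>

definition form_dom :: "(nat \<Rightarrow> real) \<Rightarrow> (nat \<Rightarrow> 'a::real_inner) \<Rightarrow> 'a set" where
  "form_dom lam e = {x. summable (\<lambda>j. lam (Suc j) * (inner x (e (Suc j)))\<^sup>2)}"

definition L_form :: "(nat \<Rightarrow> real) \<Rightarrow> (nat \<Rightarrow> 'a::real_inner) \<Rightarrow> 'a \<Rightarrow> 'a \<Rightarrow> real" where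
  "L_form lam e \<psi> \<phi> = (\<Sum>j. lam (Suc j) * inner \<psi> (e (Suc j)) * inner \<phi> (e (Suc j)))"

definition discrete_op :: "'a::real_inner set \<Rightarrow> (nat \<Rightarrow> real) \<Rightarrow> (nat \<Rightarrow> 'a) \<Rightarrow> 'a \<Rightarrow> 'a" where
  "discrete_op V lam e \<psi> = (THE w. w \<in> V \<and> (\<forall>\<phi>\<in>V. inner w \<phi> = L_form lam e \<psi> \<phi>))"

definition resolv :: "'a::real_vector set \<Rightarrow> ('a \<Rightarrow> 'a) \<Rightarrow> real \<Rightarrow> 'a \<Rightarrow> 'a" where
  "resolv V A y v = (THE u. u \<in> V \<and> u + exp (2 * y) *\<^sub>R A u = v)"

definition Qop :: "real \<Rightarrow> real \<Rightarrow> 'a::real_vector set \<Rightarrow> ('a \<Rightarrow> 'a) \<Rightarrow> 'a \<Rightarrow> 'a" where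
  "Qop \<beta> k V A v =
     (2 * k * sin (pi * \<beta>) / pi) *\<^sub>R
     (\<Sum>l\<in>{- \<lceil>pi\<^sup>2 / (4 * \<beta> * k\<^sup>2)\<rceil> .. \<lceil>pi\<^sup>2 / (4 * (1 - \<beta>) * k\<^sup>2)\<rceil>}.
        exp (2 * \<beta> * (of_int l * k)) *\<^sub>R resolv V A (of_int l * k) v)"

definition orth_proj :: "'a::real_inner set \<Rightarrow> 'a \<Rightarrow> 'a" where
  "orth_proj V x = (THE y. y \<in> V \<and> (\<forall>z\<in>V. inner (x - y) z = 0))"

definition P_op :: "real \<Rightarrow> (nat \<Rightarrow> real) \<Rightarrow> (nat \<Rightarrow> 'a::real_inner) \<Rightarrow> nat \<Rightarrow> (nat \<Rightarrow> 'a) \<Rightarrow> 'a \<Rightarrow> 'a" where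
  "P_op \<beta> lam e N eh g = (\<Sum>j=1..N. (lam j powr \<beta> * inner g (e j)) *\<^sub>R eh j)"

definition W_beta :: "real \<Rightarrow> (nat \<Rightarrow> real) \<Rightarrow> (nat \<Rightarrow> 'a::real_inner) \<Rightarrow> (nat \<Rightarrow> real \<Rightarrow> 'w \<Rightarrow> real) \<Rightarrow> real \<Rightarrow> 'w \<Rightarrow> 'a" where
  "W_beta \<beta> lam e B t \<omega> = (\<Sum>j. (lam (Suc j) powr (- \<beta>) * B (Suc j) t \<omega>) *\<^sub>R e (Suc j))"

definition std_BM :: "'w measure \<Rightarrow> (real \<Rightarrow> 'w \<Rightarrow> real) \<Rightarrow> bool" where
  "std_BM M B \<longleftrightarrow> prob_space M
     \<and> (\<forall>t\<ge>0. B t \<in> borel_measurable M)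
     \<and> (AE \<omega> in M. B 0 \<omega> = 0)
     \<and> (AE \<omega> in M. continuous_on {0..} (\<lambda>t. B t \<omega>))
     \<and> (\<forall>s t. 0 \<le> s \<and> s < t \<longrightarrow>
          distributed M lborel (\<lambda>\<omega>. B t \<omega> - B s \<omega>)
            (\<lambda>x. ennreal (normal_density 0 (sqrt (t - s)) x)))
     \<and> (\<forall>ts::real list. sorted_wrt (<) ts \<and> (\<forall>x\<in>set ts. 0 \<le> x) \<longrightarrow>
          prob_space.indep_vars M (\<lambda>_. borel) (\<lambda>i \<omega>. B (ts ! Suc i) \<omega> - B (ts ! i) \<omega>)
            {..<length ts - 1})"

definition Y_tilde :: "real \<Rightarrow> (nat \<Rightarrow> real) \<Rightarrow> (nat \<Rightarrow> 'a::{real_inner,complete_space})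
    \<Rightarrow> 'a set \<Rightarrow> nat \<Rightarrow> (nat \<Rightarrow> 'a) \<Rightarrow> real \<Rightarrow> (nat \<Rightarrow> real \<Rightarrow> 'w \<Rightarrow> real) \<Rightarrow> 'a \<Rightarrow> real \<Rightarrow> 'w \<Rightarrow> 'a" where
  "Y_tilde \<beta> lam e Vh Nh ehh k B g t \<omega> =
     Qop \<beta> k Vh (discrete_op Vh lam e) (orth_proj Vh g)
     + Qop \<beta> k Vh (discrete_op Vh lam e) (P_op \<beta> lam e Nh ehh (W_beta \<beta> lam e B t \<omega>))"

end

theory Submission
  imports Defs
begin

text \<open>In the eigenbasis \<open>e_{j,h}\<close> of \<open>L_h\<close> the operator \<open>Q_{h,k}\<close> acts diagonally by
  \<open>q_k(\<lambda>)\<close>, the sinc quadrature of \<open>\<lambda> powr -\<beta>\<close>, and the \<open>j\<close>-th coordinate of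
  \<open>P_h W(t)\<close> is almost surely \<open>B_j(t)\<close>. Hence
  \<open>\<parallel>Y(t)\<parallel>\<^sup>2 = \<Sum>_j q_k(\<lambda>_{j,h})\<^sup>2 (g_j + B_j(t))\<^sup>2\<close> with \<open>g_j = (g, e_{j,h})\<close>.
  After the shift \<open>z = y + ln \<lambda> / 2\<close> the quadrature terms decay geometrically in \<open>|z|\<close>,
  so \<open>q_k(\<lambda>) \<le> K \<lambda> powr -\<beta>\<close> uniformly in \<open>k \<le> 1\<close>; together with \<open>\<lambda>_{j,h} \<ge> \<lambda>_j\<close>
  and \<open>2\<alpha>\<beta> > 1\<close> this bounds \<open>\<Sum>_j q_k(\<lambda>_{j,h})\<^sup>2\<close> independently of \<open>h\<close> and \<open>k\<close>.
  Jensen's inequality with these weights reduces \<open>E \<parallel>Y(t)\<parallel>\<^sup>p\<close> to Gaussian moments of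
  \<open>g_j + B_j(t)\<close>.\<close>

section \<open>Finite orthonormal families and the discrete operator\<close>

definition orthonormal_upto :: "(nat \<Rightarrow> 'a::real_inner) \<Rightarrow> nat \<Rightarrow> bool" where
  "orthonormal_upto u n \<longleftrightarrow>
     (\<forall>i\<in>{1..n}. \<forall>j\<in>{1..n}. inner (u i) (u j) = (if i = j then 1 else 0))"

lemma inner_sum_orthonormal_upto:
  assumes "orthonormal_upto u n" "i \<in> {1..n}"
  shows "inner (\<Sum>j=1..n. c j *\<^sub>R u j) (u i) = c i"
proof -
  have "inner (\<Sum>j=1..n. c j *\<^sub>R u j) (u i) = (\<Sum>j=1..n. c j * (if j = i then 1 else 0))"
    using assms unfolding orthonormal_upto_def by (auto simp: inner_sum_left intro!: sum.cong)
  also have "\<dots> = c i"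
    using assms(2) by (simp add: if_distrib sum.delta cong: if_cong)
  finally show ?thesis .
qed

lemma norm_sum_orthonormal_upto:
  assumes "orthonormal_upto u n"
  shows "norm (\<Sum>j=1..n. c j *\<^sub>R u j) = sqrt (\<Sum>j=1..n. (c j)\<^sup>2)"
proof -
  have "(norm (\<Sum>j=1..n. c j *\<^sub>R u j))\<^sup>2 = (\<Sum>j=1..n. c j * inner (\<Sum>i=1..n. c i *\<^sub>R u i) (u j))"
    by (simp add: power2_norm_eq_inner inner_sum_right)
  also have "\<dots> = (\<Sum>j=1..n. (c j)\<^sup>2)"
    using inner_sum_orthonormal_upto[OF assms] by (auto simp: power2_eq_square intro!: sum.cong)
  finally show ?thesis
    by (intro real_sqrt_unique[symmetric]) auto
qed

lemma sum_scaleR_in_span: "(\<Sum>j=1..n. c j *\<^sub>R u j) \<in> span (u ` {1..n})"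
  by (intro span_sum span_scale span_base) auto

lemma span_orthonormal_upto_expansion:
  assumes "orthonormal_upto u n" "x \<in> span (u ` {1..n})"
  shows "x = (\<Sum>j=1..n. inner x (u j) *\<^sub>R u j)"
  using assms(2)
proof (induct rule: span_induct)
  case base
  show ?case
    unfolding subspace_def
  proof (intro conjI allI impI ballI)
    fix x y c assume "x \<in> Collect (\<lambda>x. x = (\<Sum>j=1..n. inner x (u j) *\<^sub>R u j))"
      "y \<in> Collect (\<lambda>x. x = (\<Sum>j=1..n. inner x (u j) *\<^sub>R u j))"
    then show "x + y \<in> Collect (\<lambda>x. x = (\<Sum>j=1..n. inner x (u j) *\<^sub>R u j))"
      and "c *\<^sub>R x \<in> Collect (\<lambda>x. x = (\<Sum>j=1..n. inner x (u j) *\<^sub>R u j))"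
      by (simp_all add: inner_add_left scaleR_add_left sum.distrib scaleR_sum_right)
        (metis (no_types, lifting) scaleR_scaleR scaleR_sum_right sum.cong)
  qed simp
next
  case (step x)
  then obtain i where i: "i \<in> {1..n}" "x = u i" by auto
  have "(\<Sum>j=1..n. inner (u i) (u j) *\<^sub>R u j) = (\<Sum>j=1..n. if j = i then u i else 0)"
    using assms(1) i(1) unfolding orthonormal_upto_def by (intro sum.cong) auto
  also have "\<dots> = u i" using i(1) by (simp add: sum.delta)
  finally show ?case using i by simp
qed

lemma span_orthonormal_upto_eqI:
  assumes "orthonormal_upto u n" "x \<in> span (u ` {1..n})"
    and "\<And>j. j \<in> {1..n} \<Longrightarrow> inner x (u j) = c j"
  shows "x = (\<Sum>j=1..n. c j *\<^sub>R u j)"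
  using span_orthonormal_upto_expansion[OF assms(1,2)] assms(3)
  by (metis (no_types, lifting) sum.cong)

lemma orth_proj_orthonormal_upto:
  assumes ons: "orthonormal_upto u n"
  shows "orth_proj (span (u ` {1..n})) g = (\<Sum>j=1..n. inner g (u j) *\<^sub>R u j)"
  unfolding orth_proj_def
proof (rule the_equality)
  let ?y = "\<Sum>j=1..n. inner g (u j) *\<^sub>R u j"
  show "?y \<in> span (u ` {1..n}) \<and> (\<forall>z\<in>span (u ` {1..n}). inner (g - ?y) z = 0)"
  proof (intro conjI ballI sum_scaleR_in_span)
    fix z assume z: "z \<in> span (u ` {1..n})"
    have "inner (g - ?y) z = (\<Sum>j=1..n. inner z (u j) * (inner g (u j) - inner ?y (u j)))"
      by (subst span_orthonormal_upto_expansion[OF ons z]) (simp add: inner_sum_right inner_diff_left)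
    also have "\<dots> = 0"
      using inner_sum_orthonormal_upto[OF ons] by (intro sum.neutral) simp
    finally show "inner (g - ?y) z = 0" .
  qed
next
  fix y assume y: "y \<in> span (u ` {1..n}) \<and> (\<forall>z\<in>span (u ` {1..n}). inner (g - y) z = 0)"
  show "y = (\<Sum>j=1..n. inner g (u j) *\<^sub>R u j)"
  proof (rule span_orthonormal_upto_eqI[OF ons])
    show "y \<in> span (u ` {1..n})" using y by blast
    fix j assume "j \<in> {1..n}"
    then have "u j \<in> span (u ` {1..n})" by (intro span_base imageI)
    then have "inner (g - y) (u j) = 0" using y by blast
    then show "inner y (u j) = inner g (u j)" by (simp add: inner_diff_left)
  qed
qed

lemma summable_L_form:
  assumes lam: "\<And>j. 0 \<le> lam (Suc j)" and "\<psi> \<in> form_dom lam e" "\<phi> \<in> form_dom lam e"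
  shows "summable (\<lambda>j. lam (Suc j) * inner \<psi> (e (Suc j)) * inner \<phi> (e (Suc j)))"
proof (rule summable_comparison_test)
  have "summable (\<lambda>j. lam (Suc j) * (inner \<psi> (e (Suc j)))\<^sup>2)"
    "summable (\<lambda>j. lam (Suc j) * (inner \<phi> (e (Suc j)))\<^sup>2)"
    using assms(2,3) unfolding form_dom_def by auto
  then show "summable (\<lambda>j. (lam (Suc j) * (inner \<psi> (e (Suc j)))\<^sup>2
                           + lam (Suc j) * (inner \<phi> (e (Suc j)))\<^sup>2) / 2)"
    by (intro summable_divide summable_add)
  show "\<exists>N. \<forall>n\<ge>N. norm (lam (Suc n) * inner \<psi> (e (Suc n)) * inner \<phi> (e (Suc n)))
      \<le> (lam (Suc n) * (inner \<psi> (e (Suc n)))\<^sup>2 + lam (Suc n) * (inner \<phi> (e (Suc n)))\<^sup>2) / 2"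
  proof (intro exI allI impI)
    fix n :: nat
    define a b where "a = inner \<psi> (e (Suc n))" and "b = inner \<phi> (e (Suc n))"
    have "lam (Suc n) * (2 * \<bar>a * b\<bar>) \<le> lam (Suc n) * (a\<^sup>2 + b\<^sup>2)"
      using lam sum_squares_bound[of "\<bar>a\<bar>" "\<bar>b\<bar>"] by (intro mult_left_mono) (auto simp: abs_mult)
    then show "norm (lam (Suc n) * a * b) \<le> (lam (Suc n) * a\<^sup>2 + lam (Suc n) * b\<^sup>2) / 2"
      using lam[of n] by (simp add: abs_mult algebra_simps)
  qed
qed

lemma L_form_commute: "L_form lam e \<psi> \<phi> = L_form lam e \<phi> \<psi>"
  unfolding L_form_def by (simp add: ac_simps)

lemma L_form_sum_right:
  assumes lam: "\<And>j. 0 \<le> lam (Suc j)" and \<psi>: "\<psi> \<in> form_dom lam e"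
    and u: "\<And>j. j \<in> {1..n} \<Longrightarrow> u j \<in> form_dom lam e"
  shows "L_form lam e \<psi> (\<Sum>j=1..n. c j *\<^sub>R u j) = (\<Sum>j=1..n. c j * L_form lam e \<psi> (u j))"
proof -
  have "L_form lam e \<psi> (\<Sum>j=1..n. c j *\<^sub>R u j)
      = (\<Sum>i. \<Sum>j=1..n. c j * (lam (Suc i) * inner \<psi> (e (Suc i)) * inner (u j) (e (Suc i))))"
    unfolding L_form_def by (simp add: inner_sum_left sum_distrib_left sum_distrib_right ac_simps)
  also have "\<dots> = (\<Sum>j=1..n. \<Sum>i. c j * (lam (Suc i) * inner \<psi> (e (Suc i)) * inner (u j) (e (Suc i))))"
    by (intro suminf_sum summable_mult summable_L_form lam \<psi> u) auto
  also have "\<dots> = (\<Sum>j=1..n. c j * L_form lam e \<psi> (u j))"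
    unfolding L_form_def by (intro sum.cong refl suminf_mult summable_L_form lam \<psi> u) auto
  finally show ?thesis .
qed

lemma L_form_nonneg:
  assumes "\<And>j. 0 \<le> lam (Suc j)" "\<psi> \<in> form_dom lam e"
  shows "0 \<le> L_form lam e \<psi> \<psi>"
  unfolding L_form_def using assms
  by (intro suminf_nonneg summable_L_form) (auto simp: mult.assoc)

context
  fixes u :: "nat \<Rightarrow> 'a::real_inner" and n :: nat and lam :: "nat \<Rightarrow> real" and e :: "nat \<Rightarrow> 'a"
  assumes ons: "orthonormal_upto u n"
    and lam: "\<And>j. 0 \<le> lam (Suc j)"
    and dom: "span (u ` {1..n}) \<subseteq> form_dom lam e"
begin

lemma orthonormal_upto_in_form_dom: "j \<in> {1..n} \<Longrightarrow> u j \<in> form_dom lam e"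
  using dom by (meson imageI span_base subsetD)

lemma discrete_op_span:
  assumes \<psi>: "\<psi> \<in> span (u ` {1..n})"
  shows "discrete_op (span (u ` {1..n})) lam e \<psi> = (\<Sum>j=1..n. L_form lam e \<psi> (u j) *\<^sub>R u j)"
  unfolding discrete_op_def
proof (rule the_equality)
  let ?w = "\<Sum>j=1..n. L_form lam e \<psi> (u j) *\<^sub>R u j"
  show "?w \<in> span (u ` {1..n}) \<and> (\<forall>\<phi>\<in>span (u ` {1..n}). inner ?w \<phi> = L_form lam e \<psi> \<phi>)"
  proof (intro conjI ballI sum_scaleR_in_span)
    fix \<phi> assume \<phi>: "\<phi> \<in> span (u ` {1..n})"
    have "L_form lam e \<psi> \<phi> = L_form lam e \<psi> (\<Sum>j=1..n. inner \<phi> (u j) *\<^sub>R u j)"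
      using span_orthonormal_upto_expansion[OF ons \<phi>] by simp
    also have "\<dots> = (\<Sum>j=1..n. inner \<phi> (u j) * L_form lam e \<psi> (u j))"
      using \<psi> dom by (intro L_form_sum_right lam orthonormal_upto_in_form_dom) auto
    also have "\<dots> = inner ?w \<phi>"
      by (simp add: inner_sum_left inner_sum_right inner_commute mult.commute)
    finally show "inner ?w \<phi> = L_form lam e \<psi> \<phi>" ..
  qed
next
  fix w assume w: "w \<in> span (u ` {1..n}) \<and> (\<forall>\<phi>\<in>span (u ` {1..n}). inner w \<phi> = L_form lam e \<psi> \<phi>)"
  show "w = (\<Sum>j=1..n. L_form lam e \<psi> (u j) *\<^sub>R u j)"
  proof (rule span_orthonormal_upto_eqI[OF ons])
    show "w \<in> span (u ` {1..n})" using w by blast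
    fix j assume "j \<in> {1..n}"
    then have "u j \<in> span (u ` {1..n})" by (intro span_base imageI)
    then show "inner w (u j) = L_form lam e \<psi> (u j)" using w by blast
  qed
qed

context
  fixes lamh :: "nat \<Rightarrow> real"
  assumes eig: "\<And>j. j \<in> {1..n} \<Longrightarrow> discrete_op (span (u ` {1..n})) lam e (u j) = lamh j *\<^sub>R u j"
begin

lemma L_form_eigenvectors:
  assumes i: "i \<in> {1..n}" and j: "j \<in> {1..n}"
  shows "L_form lam e (u i) (u j) = (if i = j then lamh i else 0)"
proof -
  have "(\<Sum>j=1..n. L_form lam e (u i) (u j) *\<^sub>R u j) = lamh i *\<^sub>R u i"
    using discrete_op_span[of "u i"] eig[OF i] i by (simp add: span_base)
  then have "inner (\<Sum>j=1..n. L_form lam e (u i) (u j) *\<^sub>R u j) (u j) = inner (lamh i *\<^sub>R u i) (u j)"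
    by simp
  then show ?thesis
    using inner_sum_orthonormal_upto[OF ons j] ons i j unfolding orthonormal_upto_def by auto
qed

lemma discrete_eigenvalue_nonneg: "j \<in> {1..n} \<Longrightarrow> 0 \<le> lamh j"
  using L_form_eigenvectors[of j j] L_form_nonneg[OF lam orthonormal_upto_in_form_dom, of j] by auto

lemma discrete_op_sum:
  "discrete_op (span (u ` {1..n})) lam e (\<Sum>j=1..n. c j *\<^sub>R u j) = (\<Sum>j=1..n. (c j * lamh j) *\<^sub>R u j)"
proof -
  have "L_form lam e (\<Sum>i=1..n. c i *\<^sub>R u i) (u j) = c j * lamh j" if j: "j \<in> {1..n}" for j
  proof -
    have "L_form lam e (\<Sum>i=1..n. c i *\<^sub>R u i) (u j) = (\<Sum>i=1..n. c i * L_form lam e (u j) (u i))"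
      by (subst L_form_commute) (intro L_form_sum_right lam orthonormal_upto_in_form_dom j)
    also have "\<dots> = (\<Sum>i=1..n. c i * (if i = j then lamh j else 0))"
      using j by (intro sum.cong refl) (auto simp: L_form_eigenvectors)
    also have "\<dots> = c j * lamh j"
      using j by (simp add: if_distrib sum.delta cong: if_cong)
    finally show ?thesis .
  qed
  then show ?thesis
    unfolding discrete_op_span[OF sum_scaleR_in_span] by (intro sum.cong refl) simp
qed

lemma resolv_span:
  assumes v: "v \<in> span (u ` {1..n})"
  shows "resolv (span (u ` {1..n})) (discrete_op (span (u ` {1..n})) lam e) y v
       = (\<Sum>j=1..n. (inner v (u j) / (1 + exp (2 * y) * lamh j)) *\<^sub>R u j)"
  unfolding resolv_def
proof (rule the_equality)
  let ?V = "span (u ` {1..n})"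
  let ?A = "discrete_op ?V lam e"
  let ?u = "\<Sum>j=1..n. (inner v (u j) / (1 + exp (2 * y) * lamh j)) *\<^sub>R u j"
  have pos: "0 < 1 + exp (2 * y) * lamh j" if "j \<in> {1..n}" for j
    using discrete_eigenvalue_nonneg[OF that] by (simp add: add_pos_nonneg)
  have "?u + exp (2 * y) *\<^sub>R ?A ?u = (\<Sum>j=1..n. inner v (u j) *\<^sub>R u j)"
    unfolding discrete_op_sum scaleR_sum_right sum.distrib[symmetric]
  proof (intro sum.cong refl)
    fix j assume "j \<in> {1..n}"
    have "inner v (u j) / (1 + exp (2 * y) * lamh j)
        + exp (2 * y) * (inner v (u j) / (1 + exp (2 * y) * lamh j) * lamh j)
        = inner v (u j) / (1 + exp (2 * y) * lamh j) * (1 + exp (2 * y) * lamh j)"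
      by (simp add: distrib_left mult.commute mult.left_commute add_divide_distrib)
    also have "\<dots> = inner v (u j)"
      using pos[OF \<open>j \<in> {1..n}\<close>] by simp
    finally have "inner v (u j) / (1 + exp (2 * y) * lamh j)
        + exp (2 * y) * (inner v (u j) / (1 + exp (2 * y) * lamh j) * lamh j) = inner v (u j)" .
    then show "(inner v (u j) / (1 + exp (2 * y) * lamh j)) *\<^sub>R u j
        + exp (2 * y) *\<^sub>R (inner v (u j) / (1 + exp (2 * y) * lamh j) * lamh j) *\<^sub>R u j
        = inner v (u j) *\<^sub>R u j"
      by (metis scaleR_add_left scaleR_scaleR)
  qed
  then show "?u \<in> ?V \<and> ?u + exp (2 * y) *\<^sub>R ?A ?u = v"
    using span_orthonormal_upto_expansion[OF ons v] sum_scaleR_in_span by metis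
next
  let ?V = "span (u ` {1..n})"
  let ?A = "discrete_op ?V lam e"
  fix w assume w: "w \<in> ?V \<and> w + exp (2 * y) *\<^sub>R ?A w = v"
  have "w = (\<Sum>j=1..n. inner w (u j) *\<^sub>R u j)"
    using w span_orthonormal_upto_expansion[OF ons] by blast
  then have "v = (\<Sum>j=1..n. inner w (u j) *\<^sub>R u j) + exp (2 * y) *\<^sub>R ?A (\<Sum>j=1..n. inner w (u j) *\<^sub>R u j)"
    using w by simp
  also have "\<dots> = (\<Sum>j=1..n. (inner w (u j) * (1 + exp (2 * y) * lamh j)) *\<^sub>R u j)"
    unfolding discrete_op_sum scaleR_sum_right sum.distrib[symmetric]
    by (intro sum.cong refl) (simp add: algebra_simps)
  finally have v_coeff: "inner v (u j) = inner w (u j) * (1 + exp (2 * y) * lamh j)"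
    if "j \<in> {1..n}" for j
    using inner_sum_orthonormal_upto[OF ons that] by simp
  show "w = (\<Sum>j=1..n. (inner v (u j) / (1 + exp (2 * y) * lamh j)) *\<^sub>R u j)"
  proof (rule span_orthonormal_upto_eqI[OF ons])
    show "w \<in> ?V" using w by blast
    fix j assume j: "j \<in> {1..n}"
    have "0 < 1 + exp (2 * y) * lamh j"
      using discrete_eigenvalue_nonneg[OF j] by (simp add: add_pos_nonneg)
    then show "inner w (u j) = inner v (u j) / (1 + exp (2 * y) * lamh j)"
      unfolding v_coeff[OF j] by simp
  qed
qed

end

end

section \<open>Sinc quadrature\<close>

definition sinc_quad_symbol :: "real \<Rightarrow> real \<Rightarrow> real \<Rightarrow> real" where
  "sinc_quad_symbol \<beta> k x = (2 * k * sin (pi * \<beta>) / pi) *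
     (\<Sum>l\<in>{- \<lceil>pi\<^sup>2 / (4 * \<beta> * k\<^sup>2)\<rceil> .. \<lceil>pi\<^sup>2 / (4 * (1 - \<beta>) * k\<^sup>2)\<rceil>}.
        exp (2 * \<beta> * (of_int l * k)) / (1 + exp (2 * (of_int l * k)) * x))"

lemma Qop_span:
  assumes ons: "orthonormal_upto u n" and lam: "\<And>j. 0 \<le> lam (Suc j)"
    and dom: "span (u ` {1..n}) \<subseteq> form_dom lam e"
    and eig: "\<And>j. j \<in> {1..n} \<Longrightarrow> discrete_op (span (u ` {1..n})) lam e (u j) = lamh j *\<^sub>R u j"
    and v: "v \<in> span (u ` {1..n})"
  shows "Qop \<beta> k (span (u ` {1..n})) (discrete_op (span (u ` {1..n})) lam e) v
       = (\<Sum>j=1..n. (sinc_quad_symbol \<beta> k (lamh j) * inner v (u j)) *\<^sub>R u j)"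
proof -
  let ?L = "{- \<lceil>pi\<^sup>2 / (4 * \<beta> * k\<^sup>2)\<rceil> .. \<lceil>pi\<^sup>2 / (4 * (1 - \<beta>) * k\<^sup>2)\<rceil>}"
  let ?c = "2 * k * sin (pi * \<beta>) / pi"
  have "Qop \<beta> k (span (u ` {1..n})) (discrete_op (span (u ` {1..n})) lam e) v
      = ?c *\<^sub>R (\<Sum>l\<in>?L. exp (2 * \<beta> * (of_int l * k)) *\<^sub>R
           (\<Sum>j=1..n. (inner v (u j) / (1 + exp (2 * (of_int l * k)) * lamh j)) *\<^sub>R u j))"
    unfolding Qop_def using resolv_span[OF ons lam dom eig v] by simp
  also have "\<dots> = (\<Sum>j=1..n. (?c * (\<Sum>l\<in>?L. exp (2 * \<beta> * (of_int l * k))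
                     * (inner v (u j) / (1 + exp (2 * (of_int l * k)) * lamh j)))) *\<^sub>R u j)"
    by (simp add: scaleR_sum_right scaleR_sum_left sum_distrib_left, rule sum.swap)
  also have "\<dots> = (\<Sum>j=1..n. (sinc_quad_symbol \<beta> k (lamh j) * inner v (u j)) *\<^sub>R u j)"
    unfolding sinc_quad_symbol_def
    by (intro sum.cong refl arg_cong[where f="\<lambda>x. x *\<^sub>R _"])
      (simp add: sum_distrib_left sum_distrib_right mult.assoc)
  finally show ?thesis .
qed


lemma Qop_sum_eigenvectors:
  assumes ons: "orthonormal_upto u n" and lam: "\<And>j. 0 \<le> lam (Suc j)"
    and dom: "span (u ` {1..n}) \<subseteq> form_dom lam e"
    and eig: "\<And>j. j \<in> {1..n} \<Longrightarrow> discrete_op (span (u ` {1..n})) lam e (u j) = lamh j *\<^sub>R u j"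
  shows "Qop \<beta> k (span (u ` {1..n})) (discrete_op (span (u ` {1..n})) lam e) (\<Sum>j=1..n. c j *\<^sub>R u j)
       = (\<Sum>j=1..n. (sinc_quad_symbol \<beta> k (lamh j) * c j) *\<^sub>R u j)"
proof -
  have "Qop \<beta> k (span (u ` {1..n})) (discrete_op (span (u ` {1..n})) lam e) (\<Sum>j=1..n. c j *\<^sub>R u j)
      = (\<Sum>j=1..n. (sinc_quad_symbol \<beta> k (lamh j) * inner (\<Sum>i=1..n. c i *\<^sub>R u i) (u j)) *\<^sub>R u j)"
    by (rule Qop_span[OF ons lam dom eig sum_scaleR_in_span]) auto
  also have "\<dots> = (\<Sum>j=1..n. (sinc_quad_symbol \<beta> k (lamh j) * c j) *\<^sub>R u j)"
  proof (rule sum.cong[OF refl])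
    fix j assume "j \<in> {1..n}"
    show "(sinc_quad_symbol \<beta> k (lamh j) * inner (\<Sum>i=1..n. c i *\<^sub>R u i) (u j)) *\<^sub>R u j
        = (sinc_quad_symbol \<beta> k (lamh j) * c j) *\<^sub>R u j"
      unfolding inner_sum_orthonormal_upto[OF ons \<open>j \<in> {1..n}\<close>] ..
  qed
  finally show ?thesis .
qed

lemma norm_Y_tilde_eigenbasis:
  assumes ons: "orthonormal_upto u n" and lam: "\<And>j. 0 \<le> lam (Suc j)"
    and dom: "span (u ` {1..n}) \<subseteq> form_dom lam e"
    and eig: "\<And>j. j \<in> {1..n} \<Longrightarrow> discrete_op (span (u ` {1..n})) lam e (u j) = lamh j *\<^sub>R u j"
  shows "norm (Y_tilde \<beta> lam e (span (u ` {1..n})) n u k B g t \<omega>)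
     = sqrt (\<Sum>j=1..n. (sinc_quad_symbol \<beta> k (lamh j)
                * (inner g (u j) + lam j powr \<beta> * inner (W_beta \<beta> lam e B t \<omega>) (e j)))\<^sup>2)"
proof -
  let ?V = "span (u ` {1..n})"
  let ?q = "\<lambda>j. sinc_quad_symbol \<beta> k (lamh j)"
  let ?w = "\<lambda>j. lam j powr \<beta> * inner (W_beta \<beta> lam e B t \<omega>) (e j)"
  have P: "P_op \<beta> lam e n u (W_beta \<beta> lam e B t \<omega>) = (\<Sum>j=1..n. ?w j *\<^sub>R u j)"
    unfolding P_op_def ..
  have "Y_tilde \<beta> lam e ?V n u k B g t \<omega>
      = (\<Sum>j=1..n. (?q j * inner g (u j)) *\<^sub>R u j) + (\<Sum>j=1..n. (?q j * ?w j) *\<^sub>R u j)"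
    unfolding Y_tilde_def P orth_proj_orthonormal_upto[OF ons]
    by (simp only: Qop_sum_eigenvectors[OF ons lam dom eig])
  also have "\<dots> = (\<Sum>j=1..n. (?q j * (inner g (u j) + ?w j)) *\<^sub>R u j)"
    by (simp add: sum.distrib[symmetric] algebra_simps)
  finally show ?thesis
    by (simp only: norm_sum_orthonormal_upto[OF ons])
qed

lemma sum_power_le_geometric:
  fixes r :: real
  assumes "finite A" "0 \<le> r" "r < 1"
  shows "(\<Sum>m\<in>A. r ^ m) \<le> 1 / (1 - r)"
proof -
  have "(\<Sum>m\<in>A. r ^ m) \<le> (\<Sum>m. r ^ m)"
    using assms by (intro sum_le_suminf summable_geometric) auto
  also have "\<dots> = 1 / (1 - r)" using assms by (simp add: suminf_geometric)
  finally show ?thesis .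
qed

lemma sum_power_abs_diff_le:
  fixes L :: "int set" and r :: real and l0 :: int
  assumes "finite L" "0 \<le> r" "r < 1"
  shows "(\<Sum>l\<in>L. r ^ nat \<bar>l - l0\<bar>) \<le> 2 / (1 - r)"
proof -
  let ?Lp = "{l\<in>L. l0 \<le> l}" and ?Lm = "{l\<in>L. l < l0}"
  have "(\<Sum>l\<in>?Lp. r ^ nat \<bar>l - l0\<bar>) = (\<Sum>m\<in>(\<lambda>l. nat (l - l0)) ` ?Lp. r ^ m)"
    by (subst sum.reindex) (auto simp: inj_on_def intro!: sum.cong)
  also have "\<dots> \<le> 1 / (1 - r)" using assms by (intro sum_power_le_geometric) auto
  finally have up: "(\<Sum>l\<in>?Lp. r ^ nat \<bar>l - l0\<bar>) \<le> 1 / (1 - r)" .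
  have "(\<Sum>l\<in>?Lm. r ^ nat \<bar>l - l0\<bar>) = (\<Sum>m\<in>(\<lambda>l. nat (l0 - l)) ` ?Lm. r ^ m)"
    by (subst sum.reindex) (auto simp: inj_on_def intro!: sum.cong)
  also have "\<dots> \<le> 1 / (1 - r)" using assms by (intro sum_power_le_geometric) auto
  finally have down: "(\<Sum>l\<in>?Lm. r ^ nat \<bar>l - l0\<bar>) \<le> 1 / (1 - r)" .
  have "(\<Sum>l\<in>L. r ^ nat \<bar>l - l0\<bar>) = (\<Sum>l\<in>?Lp. r ^ nat \<bar>l - l0\<bar>) + (\<Sum>l\<in>?Lm. r ^ nat \<bar>l - l0\<bar>)"
    using assms(1) by (subst sum.union_disjoint[symmetric]) (auto intro!: sum.cong)
  with up down show ?thesis by simp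
qed

lemma exp_ratio_le_exp_abs:
  fixes \<beta> z :: real
  assumes "0 < \<beta>" "\<beta> < 1"
  shows "exp (2 * \<beta> * z) / (1 + exp (2 * z)) \<le> exp (- 2 * min \<beta> (1 - \<beta>) * \<bar>z\<bar>)"
proof (cases "z \<ge> 0")
  case True
  have "exp (2 * \<beta> * z) / (1 + exp (2 * z)) \<le> exp (2 * \<beta> * z) / exp (2 * z)"
    by (intro divide_left_mono) (auto intro!: mult_pos_pos add_pos_pos)
  also have "\<dots> = exp (- 2 * ((1 - \<beta>) * z))"
    by (simp add: exp_diff[symmetric] algebra_simps)
  also have "\<dots> \<le> exp (- 2 * min \<beta> (1 - \<beta>) * \<bar>z\<bar>)"
    using True mult_right_mono[OF min.cobounded2[of \<beta> "1 - \<beta>"] True] by simp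
  finally show ?thesis .
next
  case False
  have "exp (2 * \<beta> * z) / (1 + exp (2 * z)) \<le> exp (2 * (\<beta> * z))"
    by (simp add: divide_le_eq add_pos_pos mult.assoc)
  also have "\<dots> \<le> exp (- 2 * min \<beta> (1 - \<beta>) * \<bar>z\<bar>)"
    using False mult_right_mono_neg[OF min.cobounded1[of \<beta> "1 - \<beta>"], of z] by simp
  finally show ?thesis .
qed

lemma sinc_term_le:
  fixes \<beta> x y :: real
  assumes "0 < \<beta>" "\<beta> < 1" "0 < x"
  shows "exp (2 * \<beta> * y) / (1 + exp (2 * y) * x)
       \<le> x powr (- \<beta>) * exp (- 2 * min \<beta> (1 - \<beta>) * \<bar>y + ln x / 2\<bar>)"
proof -
  let ?z = "y + ln x / 2"
  have "exp (2 * y) * x = exp (2 * ?z)"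
    using assms(3) by (simp add: exp_add distrib_left)
  moreover have "exp (2 * \<beta> * y) = x powr (- \<beta>) * exp (2 * \<beta> * ?z)"
    using assms(3) by (simp add: powr_def exp_add[symmetric] algebra_simps)
  ultimately have "exp (2 * \<beta> * y) / (1 + exp (2 * y) * x)
      = x powr (- \<beta>) * (exp (2 * \<beta> * ?z) / (1 + exp (2 * ?z)))"
    by simp
  also have "\<dots> \<le> x powr (- \<beta>) * exp (- 2 * min \<beta> (1 - \<beta>) * \<bar>?z\<bar>)"
    by (intro mult_left_mono exp_ratio_le_exp_abs assms) auto
  finally show ?thesis .
qed

lemma abs_grid_shift_ge:
  fixes k c :: real and l :: int
  assumes "0 < k"
  shows "(of_int \<bar>l - \<lfloor>- c / k\<rfloor>\<bar> - 1) * k \<le> \<bar>of_int l * k + c\<bar>"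
proof -
  let ?l0 = "\<lfloor>- c / k\<rfloor>"
  have "of_int ?l0 * k \<le> - c" "- c < (of_int ?l0 + 1) * k"
    using assms floor_divide_lower[OF assms, of "- c"] floor_divide_upper[OF assms, of "- c"]
    by auto
  then show ?thesis
    using assms by (cases "l \<le> ?l0") (auto simp: algebra_simps abs_if intro: mult_right_mono)
qed

definition sinc_quad_const :: "real \<Rightarrow> real" where
  "sinc_quad_const \<beta> = (4 / pi) * exp (2 * min \<beta> (1 - \<beta>))
     * (1 + 2 * min \<beta> (1 - \<beta>)) / (2 * min \<beta> (1 - \<beta>))"

lemma one_minus_exp_neg_bounds:
  fixes a k :: real
  assumes "0 < a" "0 < k" "k \<le> 1"
  shows "0 < 1 - exp (- a * k)" "k / (1 - exp (- a * k)) \<le> (1 + a) / a"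
proof -
  have pos: "0 < 1 + a * k" using assms by (simp add: add_pos_pos)
  have "exp (- a * k) \<le> 1 / (1 + a * k)"
    using exp_ge_add_one_self[of "a * k"] pos by (simp add: exp_minus field_simps)
  then have ge: "a * k / (1 + a * k) \<le> 1 - exp (- a * k)"
    using pos by (simp add: field_simps)
  have "0 < a * k / (1 + a * k)" using assms pos by simp
  with ge show "0 < 1 - exp (- a * k)" by linarith
  have "k / (1 - exp (- a * k)) \<le> k / (a * k / (1 + a * k))"
    using ge assms \<open>0 < a * k / (1 + a * k)\<close> by (intro divide_left_mono mult_pos_pos) auto
  also have "\<dots> = (1 + a * k) / a" using assms by (simp add: field_simps)
  also have "\<dots> \<le> (1 + a) / a" using assms by (intro divide_right_mono) (auto simp: mult_left_le)
  finally show "k / (1 - exp (- a * k)) \<le> (1 + a) / a" .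
qed

lemma sinc_quad_symbol_nonneg:
  assumes "0 < \<beta>" "\<beta> < 1" "0 < k" "0 < x"
  shows "0 \<le> sinc_quad_symbol \<beta> k x"
  using assms sin_ge_zero[of "pi * \<beta>"]
  unfolding sinc_quad_symbol_def by (intro mult_nonneg_nonneg sum_nonneg) (auto simp: add_pos_pos)

text \<open>The sinc quadrature of \<open>x powr -\<beta>\<close> is bounded by a multiple of \<open>x powr -\<beta>\<close> uniformly in
  \<open>k \<le> 1\<close>: after the shift \<open>z = y + ln x / 2\<close> the terms decay geometrically away from
  the grid point nearest to \<open>- ln x / 2\<close>, and the step \<open>k\<close> in front of the sum compensates the
  \<open>1 / k\<close> growth of the geometric series.\<close>

lemma sinc_quad_symbol_le:
  assumes \<beta>: "0 < \<beta>" "\<beta> < 1" and k: "0 < k" "k \<le> 1" and x: "0 < x"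
  shows "sinc_quad_symbol \<beta> k x \<le> sinc_quad_const \<beta> * x powr (- \<beta>)"
proof -
  define a where "a = 2 * min \<beta> (1 - \<beta>)"
  have a: "0 < a" using \<beta> by (simp add: a_def)
  define L where "L = {- \<lceil>pi\<^sup>2 / (4 * \<beta> * k\<^sup>2)\<rceil> .. \<lceil>pi\<^sup>2 / (4 * (1 - \<beta>) * k\<^sup>2)\<rceil>}"
  define T where "T l = exp (2 * \<beta> * (of_int l * k)) / (1 + exp (2 * (of_int l * k)) * x)" for l :: int
  define r where "r = exp (- a * k)"
  define l0 where "l0 = \<lfloor>- (ln x / 2) / k\<rfloor>"
  have r: "0 \<le> r" "r < 1" using one_minus_exp_neg_bounds(1)[OF a k] by (auto simp: r_def)
  have T_le: "T l \<le> x powr (- \<beta>) * exp (a * k) * r ^ nat \<bar>l - l0\<bar>" for l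
  proof -
    have "T l \<le> x powr (- \<beta>) * exp (- a * \<bar>of_int l * k + ln x / 2\<bar>)"
      using sinc_term_le[OF \<beta> x, of "of_int l * k"] unfolding T_def a_def by simp
    also have "exp (- a * \<bar>of_int l * k + ln x / 2\<bar>) \<le> exp (a * k + of_nat (nat \<bar>l - l0\<bar>) * (- a * k))"
      using mult_left_mono[OF abs_grid_shift_ge[OF k(1), of l "ln x / 2"], of a] a
      unfolding l0_def by (simp add: algebra_simps)
    also have "\<dots> = exp (a * k) * r ^ nat \<bar>l - l0\<bar>"
      unfolding r_def exp_add exp_of_nat_mult ..
    finally show ?thesis using x by simp
  qed
  have "(\<Sum>l\<in>L. T l) \<le> x powr (- \<beta>) * exp (a * k) * (\<Sum>l\<in>L. r ^ nat \<bar>l - l0\<bar>)"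
    by (simp add: sum_distrib_left sum_mono T_le)
  also have "\<dots> \<le> x powr (- \<beta>) * exp (a * k) * (2 / (1 - r))"
    by (intro mult_left_mono sum_power_abs_diff_le r) (auto simp: L_def)
  finally have sum_T: "(\<Sum>l\<in>L. T l) \<le> x powr (- \<beta>) * exp (a * k) * (2 / (1 - r))" .
  have "sinc_quad_symbol \<beta> k x \<le> (2 * k / pi) * (\<Sum>l\<in>L. T l)"
    unfolding sinc_quad_symbol_def L_def T_def using k x
    by (intro mult_right_mono) (auto simp: divide_right_mono sum_nonneg add_pos_pos)
  also have "\<dots> \<le> (2 * k / pi) * (x powr (- \<beta>) * exp (a * k) * (2 / (1 - r)))"
    using sum_T k by (intro mult_left_mono) auto
  also have "\<dots> = (4 / pi) * exp (a * k) * x powr (- \<beta>) * (k / (1 - r))"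
    by (simp add: field_simps)
  also have "\<dots> \<le> (4 / pi) * exp a * x powr (- \<beta>) * ((1 + a) / a)"
    using k a one_minus_exp_neg_bounds[OF a k] unfolding r_def
    by (intro mult_mono) (auto intro!: mult_nonneg_nonneg divide_nonneg_nonneg simp: mult_le_cancel_left1)
  also have "\<dots> = sinc_quad_const \<beta> * x powr (- \<beta>)"
    unfolding sinc_quad_const_def a_def by simp
  finally show ?thesis .
qed

section \<open>Power means and Gaussian moments\<close>

lemma weighted_power_mean_le:
  fixes w x :: "'i \<Rightarrow> real"
  assumes J: "finite J" and w: "\<And>j. j \<in> J \<Longrightarrow> 0 \<le> w j" and x: "\<And>j. j \<in> J \<Longrightarrow> 0 \<le> x j"
    and m: "1 \<le> m"
  shows "(\<Sum>j\<in>J. w j * x j) powr m \<le> (\<Sum>j\<in>J. w j) powr (m - 1) * (\<Sum>j\<in>J. w j * x j powr m)"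
proof -
  define J' where "J' = {j\<in>J. 0 < w j \<and> 0 < x j}"
  have J'J: "J' \<subseteq> J" and fin': "finite J'" using J unfolding J'_def by auto
  have sumJ: "(\<Sum>j\<in>J. w j * x j) = (\<Sum>j\<in>J'. w j * x j)"
    using w x unfolding J'_def by (intro sum.mono_neutral_right[OF J]) (auto simp: less_le)
  show ?thesis
  proof (cases "J' = {}")
    case True
    then show ?thesis using sumJ w by (simp add: sum_nonneg)
  next
    case False
    define S' where "S' = (\<Sum>j\<in>J'. w j)"
    have S'pos: "0 < S'" unfolding S'_def using False fin' by (intro sum_pos) (auto simp: J'_def)
    have S'le: "S' \<le> (\<Sum>j\<in>J. w j)" unfolding S'_def using w by (intro sum_mono2[OF J J'J]) auto
    have conv: "(\<Sum>j\<in>J'. (w j / S') *\<^sub>R x j) powr m \<le> (\<Sum>j\<in>J'. (w j / S') * x j powr m)"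
    proof (rule convex_on_sum[OF fin' False powr_convex[OF m]])
      show "(\<Sum>j\<in>J'. w j / S') = 1" using S'pos by (simp add: S'_def sum_divide_distrib[symmetric])
      show "\<And>i. i \<in> J' \<Longrightarrow> 0 \<le> w i / S'" using S'pos w J'J by auto
      show "\<And>i. i \<in> J' \<Longrightarrow> x i \<in> {0<..}" unfolding J'_def by auto
    qed
    have "(\<Sum>j\<in>J. w j * x j) powr m = S' powr m * (\<Sum>j\<in>J'. (w j / S') *\<^sub>R x j) powr m"
      unfolding sumJ using S'pos w x J'J
      by (simp add: sum_distrib_left powr_mult[symmetric] sum_nonneg)
    also have "\<dots> \<le> S' powr m * (\<Sum>j\<in>J'. (w j / S') * x j powr m)"
      using conv by (intro mult_left_mono) auto
    also have "\<dots> = S' powr (m - 1) * (\<Sum>j\<in>J'. w j * x j powr m)"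
      using S'pos by (simp add: powr_diff sum_distrib_left sum_divide_distrib)
    also have "\<dots> \<le> (\<Sum>j\<in>J. w j) powr (m - 1) * (\<Sum>j\<in>J. w j * x j powr m)"
      using S'pos S'le m w J'J
      by (intro mult_mono powr_mono2 sum_mono2[OF J J'J] sum_nonneg) auto
    finally show ?thesis .
  qed
qed

lemma sqrt_power_eq_powr:
  assumes "0 \<le> X" "1 \<le> n"
  shows "sqrt X ^ n = X powr (real n / 2)"
proof -
  have "sqrt X ^ n = (X powr (1/2)) powr real n"
    using assms powr_realpow'[of "X powr (1/2)" n] by (simp add: powr_half_sqrt)
  then show ?thesis by (simp add: powr_powr)
qed

lemma sqrt_sum_squares_power_le:
  fixes q y :: "'i \<Rightarrow> real"
  assumes J: "finite J" and n: "2 \<le> n"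
  shows "sqrt (\<Sum>j\<in>J. (q j * y j)\<^sup>2) ^ n
       \<le> (\<Sum>j\<in>J. (q j)\<^sup>2) powr (real n / 2 - 1) * (\<Sum>j\<in>J. (q j)\<^sup>2 * \<bar>y j\<bar> ^ n)"
proof -
  have "sqrt (\<Sum>j\<in>J. (q j * y j)\<^sup>2) ^ n = (\<Sum>j\<in>J. (q j)\<^sup>2 * (y j)\<^sup>2) powr (real n / 2)"
    using n by (subst sqrt_power_eq_powr) (auto intro: sum_nonneg simp: power_mult_distrib)
  also have "\<dots> \<le> (\<Sum>j\<in>J. (q j)\<^sup>2) powr (real n / 2 - 1) * (\<Sum>j\<in>J. (q j)\<^sup>2 * ((y j)\<^sup>2) powr (real n / 2))"
    using n by (intro weighted_power_mean_le J) auto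
  also have "\<dots> = (\<Sum>j\<in>J. (q j)\<^sup>2) powr (real n / 2 - 1) * (\<Sum>j\<in>J. (q j)\<^sup>2 * \<bar>y j\<bar> ^ n)"
    using n by (simp add: sqrt_power_eq_powr[symmetric])
  finally show ?thesis .
qed

lemma normal_abs_moment_le:
  assumes "prob_space M" and t: "0 < t" "t \<le> 1"
    and X: "distributed M lborel X (\<lambda>x. ennreal (normal_density 0 (sqrt t) x))"
  shows "integrable M (\<lambda>\<omega>. \<bar>X \<omega>\<bar> ^ n)" "(\<integral>\<omega>. \<bar>X \<omega>\<bar> ^ n \<partial>M) \<le> 1 + fact (2 * n)"
proof -
  interpret prob_space M by fact
  have sqrt_t: "0 < sqrt t" using t by simp
  show int: "integrable M (\<lambda>\<omega>. \<bar>X \<omega>\<bar> ^ n)"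
    using distributed_integrable[OF X, of "\<lambda>x. \<bar>x\<bar> ^ n"] integrable_normal_moment_abs[OF sqrt_t, of 0 n]
    by simp
  have int2: "integrable M (\<lambda>\<omega>. X \<omega> ^ (2 * n))"
    using distributed_integrable[OF X, of "\<lambda>x. x ^ (2 * n)"] integrable_normal_moment[OF sqrt_t, of 0 "2 * n"]
    by simp
  have "\<bar>x\<bar> ^ n \<le> 1 + x ^ (2 * n)" for x :: real
  proof (cases "\<bar>x\<bar> \<le> 1")
    case True
    moreover have "0 \<le> x ^ (2 * n)" by (simp add: power_mult)
    ultimately show ?thesis using power_le_one[OF abs_ge_zero True, of n] by linarith
  next
    case False
    then have "\<bar>x\<bar> ^ n \<le> \<bar>x\<bar> ^ (2 * n)" by (intro power_increasing) auto
    then show ?thesis by (simp add: power_mult power_even_abs)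
  qed
  then have "(\<integral>\<omega>. \<bar>X \<omega>\<bar> ^ n \<partial>M) \<le> (\<integral>\<omega>. 1 + X \<omega> ^ (2 * n) \<partial>M)"
    using int int2 by (intro integral_mono) auto
  also have "\<dots> = 1 + (\<integral>x. normal_density 0 (sqrt t) x * x ^ (2 * n) \<partial>lborel)"
    using int2 distributed_integral[OF X, of "\<lambda>x. x ^ (2 * n)"] by (simp add: prob_space)
  also have "\<dots> = 1 + fact (2 * n) / ((2 / t) ^ n * fact n)"
    using integral_normal_moment_even[OF sqrt_t, of 0 n] t by simp
  also have "\<dots> \<le> 1 + fact (2 * n)"
  proof -
    have "1 \<le> (2 / t) ^ n * fact n"
      using t by (intro one_le_power order.trans[OF _ mult_left_mono[of 1 "fact n"]]) auto
    then show ?thesis by (simp add: divide_le_eq mult_le_cancel_left1)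
  qed
  finally show "(\<integral>\<omega>. \<bar>X \<omega>\<bar> ^ n \<partial>M) \<le> 1 + fact (2 * n)" .
qed

lemma std_BM_abs_moment_le:
  assumes BM: "std_BM M B" and t: "0 \<le> t" "t \<le> 1"
  shows "integrable M (\<lambda>\<omega>. \<bar>B t \<omega>\<bar> ^ n)" "(\<integral>\<omega>. \<bar>B t \<omega>\<bar> ^ n \<partial>M) \<le> 1 + fact (2 * n)"
proof -
  interpret prob_space M using BM unfolding std_BM_def by blast
  have [measurable]: "B t \<in> borel_measurable M" "B 0 \<in> borel_measurable M"
    using BM t unfolding std_BM_def by auto
  have B0: "AE \<omega> in M. B 0 \<omega> = 0" using BM unfolding std_BM_def by blast
  have "integrable M (\<lambda>\<omega>. \<bar>B t \<omega>\<bar> ^ n) \<and> (\<integral>\<omega>. \<bar>B t \<omega>\<bar> ^ n \<partial>M) \<le> 1 + fact (2 * n)"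
  proof (cases "t = 0")
    case True
    have ae: "AE \<omega> in M. \<bar>B t \<omega>\<bar> ^ n = 0 ^ n" using B0 unfolding True by (rule eventually_mono) simp
    have "(\<integral>\<omega>. \<bar>B t \<omega>\<bar> ^ n \<partial>M) = 0 ^ n"
      using integral_cong_AE[OF _ _ ae] by (simp add: prob_space)
    moreover have "(0::real) ^ n \<le> 1 + fact (2 * n)"
      by (simp add: power_0_left add_nonneg_nonneg)
    ultimately show ?thesis
      by (simp add: integrable_cong_AE[OF _ _ ae])
  next
    case False
    then have "0 < t" using t by simp
    with BM have X: "distributed M lborel (\<lambda>\<omega>. B t \<omega> - B 0 \<omega>) (\<lambda>x. ennreal (normal_density 0 (sqrt t) x))"
      unfolding std_BM_def by force
    have ae: "AE \<omega> in M. \<bar>B t \<omega>\<bar> ^ n = \<bar>B t \<omega> - B 0 \<omega>\<bar> ^ n" using B0 by (rule eventually_mono) simp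
    show ?thesis
      using normal_abs_moment_le[OF prob_space_axioms \<open>0 < t\<close> t(2) X, of n]
      by (simp add: integrable_cong_AE[OF _ _ ae] integral_cong_AE[OF _ _ ae])
  qed
  then show "integrable M (\<lambda>\<omega>. \<bar>B t \<omega>\<bar> ^ n)" "(\<integral>\<omega>. \<bar>B t \<omega>\<bar> ^ n \<partial>M) \<le> 1 + fact (2 * n)"
    by auto
qed

section \<open>Coordinates of the cylindrical Wiener process\<close>

lemma suminf_not_summable:
  assumes "\<not> summable f"
  shows "suminf f = (THE s. False)"
proof -
  have "(\<lambda>s. f sums s) = (\<lambda>s. False)" using assms by (auto simp: summable_def)
  then show ?thesis unfolding suminf_def by simp
qed

context
  fixes e :: "nat \<Rightarrow> 'a::{real_inner, complete_space}"
  assumes e_orthonormal: "\<forall>i\<ge>1. \<forall>j\<ge>1. inner (e i) (e j) = (if i = j then 1 else 0)"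
begin

lemma norm_sum_orthonormal_seq:
  assumes "finite I"
  shows "norm (\<Sum>i\<in>I. c i *\<^sub>R e (Suc i)) = sqrt (\<Sum>i\<in>I. (c i)\<^sup>2)"
proof -
  have "inner (\<Sum>i\<in>I. c i *\<^sub>R e (Suc i)) (e (Suc j)) = c j" if "j \<in> I" for j
  proof -
    have "inner (\<Sum>i\<in>I. c i *\<^sub>R e (Suc i)) (e (Suc j)) = (\<Sum>i\<in>I. c i * (if i = j then 1 else 0))"
      using e_orthonormal by (auto simp: inner_sum_left intro!: sum.cong)
    then show ?thesis using assms that by (simp add: if_distrib sum.delta cong: if_cong)
  qed
  then have "(norm (\<Sum>i\<in>I. c i *\<^sub>R e (Suc i)))\<^sup>2 = (\<Sum>i\<in>I. c i * c i)"
    by (simp add: power2_norm_eq_inner inner_sum_right)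
  then show ?thesis
    by (intro real_sqrt_unique[symmetric]) (auto simp: power2_eq_square)
qed

lemma dist_partial_sums_orthonormal_seq:
  "dist (\<Sum>i<m. c i *\<^sub>R e (Suc i)) (\<Sum>i<n. c i *\<^sub>R e (Suc i))
     = sqrt (dist (\<Sum>i<m. (c i)\<^sup>2) (\<Sum>i<n. (c i)\<^sup>2))"
proof -
  have *: "dist (\<Sum>i<m. c i *\<^sub>R e (Suc i)) (\<Sum>i<n. c i *\<^sub>R e (Suc i))
     = sqrt (dist (\<Sum>i<m. (c i)\<^sup>2) (\<Sum>i<n. (c i)\<^sup>2))" if "n \<le> m" for m n
  proof -
    have "(\<Sum>i<m. c i *\<^sub>R e (Suc i)) - (\<Sum>i<n. c i *\<^sub>R e (Suc i)) = (\<Sum>i\<in>{n..<m}. c i *\<^sub>R e (Suc i))"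
      "(\<Sum>i<m. (c i)\<^sup>2) - (\<Sum>i<n. (c i)\<^sup>2) = (\<Sum>i\<in>{n..<m}. (c i)\<^sup>2)"
      using that by (simp_all add: lessThan_atLeast0 sum_diff_nat_ivl)
    then show ?thesis
      by (simp add: dist_norm norm_sum_orthonormal_seq sum_nonneg)
  qed
  show ?thesis
    using *[of n m] *[of m n] by (cases "n \<le> m") (auto simp: dist_commute)
qed

lemma summable_orthonormal_seq_iff:
  "summable (\<lambda>i. c i *\<^sub>R e (Suc i)) \<longleftrightarrow> summable (\<lambda>i. (c i)\<^sup>2)"
proof -
  define Pv Pr where "Pv n = (\<Sum>i<n. c i *\<^sub>R e (Suc i))" and "Pr n = (\<Sum>i<n. (c i)\<^sup>2)" for n
  have dist_P: "dist (Pv m) (Pv n) = sqrt (dist (Pr m) (Pr n))" for m n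
    unfolding Pv_def Pr_def by (rule dist_partial_sums_orthonormal_seq)
  have "Cauchy Pv \<longleftrightarrow> Cauchy Pr"
  proof
    assume "Cauchy Pv"
    show "Cauchy Pr"
    proof (rule metric_CauchyI)
      fix \<epsilon> :: real assume "0 < \<epsilon>"
      then obtain M where "\<forall>m\<ge>M. \<forall>n\<ge>M. dist (Pv m) (Pv n) < sqrt \<epsilon>"
        using \<open>Cauchy Pv\<close> by (meson metric_CauchyD real_sqrt_gt_zero)
      then show "\<exists>M. \<forall>m\<ge>M. \<forall>n\<ge>M. dist (Pr m) (Pr n) < \<epsilon>"
        unfolding dist_P by auto
    qed
  next
    assume "Cauchy Pr"
    show "Cauchy Pv"
    proof (rule metric_CauchyI)
      fix \<epsilon> :: real assume "0 < \<epsilon>"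
      then obtain M where "\<forall>m\<ge>M. \<forall>n\<ge>M. dist (Pr m) (Pr n) < \<epsilon>\<^sup>2"
        using \<open>Cauchy Pr\<close> by (meson metric_CauchyD zero_less_power)
      then show "\<exists>M. \<forall>m\<ge>M. \<forall>n\<ge>M. dist (Pv m) (Pv n) < \<epsilon>"
        unfolding dist_P using \<open>0 < \<epsilon>\<close> real_sqrt_less_mono[of _ "\<epsilon>\<^sup>2"] by fastforce
    qed
  qed
  then show ?thesis
    unfolding summable_iff_convergent Cauchy_convergent_iff[symmetric] Pv_def Pr_def .
qed

lemma inner_suminf_orthonormal_seq:
  assumes "summable (\<lambda>i. c i *\<^sub>R e (Suc i))"
  shows "inner (\<Sum>i. c i *\<^sub>R e (Suc i)) (e (Suc j)) = c j"
proof -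
  have "(\<lambda>i. inner (c i *\<^sub>R e (Suc i)) (e (Suc j))) sums inner (\<Sum>i. c i *\<^sub>R e (Suc i)) (e (Suc j))"
    by (rule bounded_linear.sums[OF bounded_linear_inner_left summable_sums[OF assms]])
  moreover have "(\<lambda>i. inner (c i *\<^sub>R e (Suc i)) (e (Suc j))) = (\<lambda>i. if i = j then c i else 0)"
    using e_orthonormal by auto
  ultimately show ?thesis
    using sums_unique2 sums_single[of j c] by fastforce
qed

text \<open>Off the event where the coefficients of \<open>W_beta\<close> are square summable, the series is
  not summable and \<open>suminf\<close> returns the same junk value for every \<open>\<omega>\<close>; this is what makes the
  coordinates of \<open>W_beta\<close> measurable.\<close>

lemma W_beta_coordinate_eq:
  assumes lam_pos: "\<forall>j\<ge>1. 0 < lam j" and j: "1 \<le> j"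
  shows "lam j powr \<beta> * inner (W_beta \<beta> lam e B t \<omega>) (e j)
       = (if summable (\<lambda>i. (lam (Suc i) powr (- \<beta>) * B (Suc i) t \<omega>)\<^sup>2) then B j t \<omega>
          else lam j powr \<beta> * inner (THE s::'a. False) (e j))"
proof -
  define c where "c i = lam (Suc i) powr (- \<beta>) * B (Suc i) t \<omega>" for i
  obtain j' where j': "j = Suc j'" using j by (cases j) auto
  have W: "W_beta \<beta> lam e B t \<omega> = (\<Sum>i. c i *\<^sub>R e (Suc i))"
    unfolding W_beta_def c_def ..
  show ?thesis
  proof (cases "summable (\<lambda>i. (c i)\<^sup>2)")
    case True
    then have "inner (W_beta \<beta> lam e B t \<omega>) (e j) = c j'"
      unfolding W j' by (intro inner_suminf_orthonormal_seq) (simp add: summable_orthonormal_seq_iff)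
    moreover have "lam j powr \<beta> * lam j powr (- \<beta>) = 1"
      using lam_pos j by (simp add: powr_add[symmetric] less_imp_neq[symmetric])
    ultimately show ?thesis
      using True unfolding c_def j' by (simp add: mult.assoc[symmetric])
  next
    case False
    then show ?thesis
      unfolding W c_def[symmetric]
      by (simp add: suminf_not_summable summable_orthonormal_seq_iff)
  qed
qed

end

lemma summable_iff_suminf_ennreal_neq_top:
  fixes f :: "nat \<Rightarrow> real"
  assumes "\<And>i. 0 \<le> f i"
  shows "summable f \<longleftrightarrow> (\<Sum>i. ennreal (f i)) \<noteq> \<top>"
proof
  assume "summable f"
  then show "(\<Sum>i. ennreal (f i)) \<noteq> \<top>"
    using assms by (simp add: suminf_ennreal2)
qed (use assms summable_suminf_not_top in blast)

lemma AE_summable_W_beta_coefficients: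
  assumes ps: "prob_space M" and BM: "\<forall>j\<ge>1. std_BM M (B j)" and t: "0 \<le> t" "t \<le> 1"
    and summ: "summable (\<lambda>i. lam (Suc i) powr (- 2 * \<beta>))" and lam_pos: "\<forall>j\<ge>1. 0 < lam j"
  shows "AE \<omega> in M. summable (\<lambda>i. (lam (Suc i) powr (- \<beta>) * B (Suc i) t \<omega>)\<^sup>2)"
proof -
  interpret prob_space M by (rule ps)
  have [measurable]: "B (Suc i) t \<in> borel_measurable M" for i
    using BM t unfolding std_BM_def by auto
  have sq: "(lam (Suc i) powr (- \<beta>) * x)\<^sup>2 = lam (Suc i) powr (- 2 * \<beta>) * \<bar>x\<bar> ^ 2" for i x
  proof -
    have "(lam (Suc i) powr (- \<beta>))\<^sup>2 = lam (Suc i) powr (- 2 * \<beta>)"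
      using lam_pos by (simp add: power2_eq_square powr_add[symmetric])
    then show ?thesis by (simp add: power_mult_distrib)
  qed
  have "(\<integral>\<^sup>+\<omega>. ennreal ((lam (Suc i) powr (- \<beta>) * B (Suc i) t \<omega>)\<^sup>2) \<partial>M)
      \<le> ennreal (lam (Suc i) powr (- 2 * \<beta>) * 25)" for i
  proof -
    have mom: "integrable M (\<lambda>\<omega>. \<bar>B (Suc i) t \<omega>\<bar> ^ 2)" "(\<integral>\<omega>. \<bar>B (Suc i) t \<omega>\<bar> ^ 2 \<partial>M) \<le> 25"
      using std_BM_abs_moment_le[of M "B (Suc i)" t 2] BM t by (auto simp: eval_nat_numeral)
    have "(\<integral>\<^sup>+\<omega>. ennreal ((lam (Suc i) powr (- \<beta>) * B (Suc i) t \<omega>)\<^sup>2) \<partial>M)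
        = ennreal (lam (Suc i) powr (- 2 * \<beta>) * (\<integral>\<omega>. \<bar>B (Suc i) t \<omega>\<bar> ^ 2 \<partial>M))"
      unfolding sq using mom by (subst nn_integral_eq_integral) auto
    then show ?thesis
      using mom by (auto intro!: ennreal_leI mult_left_mono)
  qed
  then have "(\<integral>\<^sup>+\<omega>. (\<Sum>i. ennreal ((lam (Suc i) powr (- \<beta>) * B (Suc i) t \<omega>)\<^sup>2)) \<partial>M)
      \<le> (\<Sum>i. ennreal (lam (Suc i) powr (- 2 * \<beta>) * 25))"
    by (subst nn_integral_suminf) (measurable, intro suminf_le summableI)
  also have "\<dots> = ennreal (\<Sum>i. lam (Suc i) powr (- 2 * \<beta>) * 25)"
    using summ by (intro suminf_ennreal2 summable_mult2) auto
  finally have "(\<integral>\<^sup>+\<omega>. (\<Sum>i. ennreal ((lam (Suc i) powr (- \<beta>) * B (Suc i) t \<omega>)\<^sup>2)) \<partial>M) \<noteq> \<infinity>"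
    by (auto simp: top_unique)
  then have "AE \<omega> in M. (\<Sum>i. ennreal ((lam (Suc i) powr (- \<beta>) * B (Suc i) t \<omega>)\<^sup>2)) \<noteq> \<infinity>"
    by (rule nn_integral_PInf_AE[rotated]) measurable
  then show ?thesis
    by (rule eventually_mono) (simp add: summable_iff_suminf_ennreal_neq_top top_unique)
qed

lemma W_beta_coordinate:
  fixes e :: "nat \<Rightarrow> 'a::{real_inner, complete_space}"
  assumes e_orthonormal: "\<forall>i\<ge>1. \<forall>j\<ge>1. inner (e i) (e j) = (if i = j then 1 else 0)"
    and lam_pos: "\<forall>j\<ge>1. 0 < lam j" and ps: "prob_space M" and BM: "\<forall>j\<ge>1. std_BM M (B j)"
    and t: "0 \<le> t" "t \<le> 1" and summ: "summable (\<lambda>i. lam (Suc i) powr (- 2 * \<beta>))"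
    and j: "1 \<le> j"
  shows "(\<lambda>\<omega>. lam j powr \<beta> * inner (W_beta \<beta> lam e B t \<omega>) (e j)) \<in> borel_measurable M"
    and "AE \<omega> in M. lam j powr \<beta> * inner (W_beta \<beta> lam e B t \<omega>) (e j) = B j t \<omega>"
proof -
  have [measurable]: "B j t \<in> borel_measurable M" "B (Suc i) t \<in> borel_measurable M" for i
    using BM t j unfolding std_BM_def by auto
  have "(\<lambda>\<omega>. lam j powr \<beta> * inner (W_beta \<beta> lam e B t \<omega>) (e j))
      = (\<lambda>\<omega>. if (\<Sum>i. ennreal ((lam (Suc i) powr (- \<beta>) * B (Suc i) t \<omega>)\<^sup>2)) \<noteq> \<top> then B j t \<omega>
             else lam j powr \<beta> * inner (THE s::'a. False) (e j))"
    unfolding W_beta_coordinate_eq[OF e_orthonormal lam_pos j]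
    by (subst summable_iff_suminf_ennreal_neq_top) simp_all
  also have "\<dots> \<in> borel_measurable M"
    by measurable
  finally show "(\<lambda>\<omega>. lam j powr \<beta> * inner (W_beta \<beta> lam e B t \<omega>) (e j)) \<in> borel_measurable M" .
  show "AE \<omega> in M. lam j powr \<beta> * inner (W_beta \<beta> lam e B t \<omega>) (e j) = B j t \<omega>"
    using AE_summable_W_beta_coefficients[OF ps BM t summ lam_pos]
    unfolding W_beta_coordinate_eq[OF e_orthonormal lam_pos j] by (rule eventually_mono) simp
qed

section \<open>Moments of the approximate solution\<close>

lemma abs_add_power_le: "\<bar>a + x\<bar> ^ m \<le> 2 ^ m * (\<bar>a\<bar> ^ m + \<bar>x\<bar> ^ m)" for a x :: real
proof -
  have "\<bar>a + x\<bar> ^ m \<le> (2 * max \<bar>a\<bar> \<bar>x\<bar>) ^ m" by (intro power_mono) auto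
  also have "\<dots> = 2 ^ m * (max \<bar>a\<bar> \<bar>x\<bar>) ^ m" by (simp add: power_mult_distrib)
  also have "(max \<bar>a\<bar> \<bar>x\<bar>) ^ m \<le> \<bar>a\<bar> ^ m + \<bar>x\<bar> ^ m" by (cases "\<bar>a\<bar> \<le> \<bar>x\<bar>") (auto simp: max_def)
  finally show ?thesis by simp
qed

lemma power_le_one_plus_power:
  fixes x :: real
  assumes "0 \<le> x" "m \<le> n"
  shows "x ^ m \<le> 1 + x ^ n"
proof (cases "x \<le> 1")
  case True
  then show ?thesis using assms power_le_one[of x m] zero_le_power[of x n] by linarith
next
  case False
  then have "x ^ m \<le> x ^ n" by (intro power_increasing assms) auto
  then show ?thesis by simp
qed

lemma shifted_std_BM_abs_moment_le:
  assumes BM: "std_BM M B" and t: "0 \<le> t" "t \<le> 1"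
    and X: "X \<in> borel_measurable M" "AE \<omega> in M. X \<omega> = B t \<omega>"
  shows "integrable M (\<lambda>\<omega>. \<bar>a + X \<omega>\<bar> ^ m)"
    and "(\<integral>\<omega>. \<bar>a + X \<omega>\<bar> ^ m \<partial>M) \<le> 2 ^ m * (\<bar>a\<bar> ^ m + (1 + fact (2 * m)))"
proof -
  interpret prob_space M using BM unfolding std_BM_def by blast
  have [measurable]: "B t \<in> borel_measurable M" using BM t unfolding std_BM_def by blast
  note X(1)[measurable]
  note mom = std_BM_abs_moment_le[OF BM t, of m]
  have int_bound: "integrable M (\<lambda>\<omega>. 2 ^ m * (\<bar>a\<bar> ^ m + \<bar>B t \<omega>\<bar> ^ m))"
    using mom by (intro integrable_mult_right Bochner_Integration.integrable_add) auto
  have le: "AE \<omega> in M. \<bar>a + X \<omega>\<bar> ^ m \<le> 2 ^ m * (\<bar>a\<bar> ^ m + \<bar>B t \<omega>\<bar> ^ m)"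
    using X(2) by (rule eventually_mono) (use abs_add_power_le in metis)
  show int: "integrable M (\<lambda>\<omega>. \<bar>a + X \<omega>\<bar> ^ m)"
    by (rule Bochner_Integration.integrable_bound[OF int_bound]) (use le in \<open>auto elim!: eventually_mono\<close>)
  have "(\<integral>\<omega>. \<bar>a + X \<omega>\<bar> ^ m \<partial>M) \<le> (\<integral>\<omega>. 2 ^ m * (\<bar>a\<bar> ^ m + \<bar>B t \<omega>\<bar> ^ m) \<partial>M)"
    by (rule integral_mono_AE[OF int int_bound le])
  also have "\<dots> = 2 ^ m * (\<bar>a\<bar> ^ m + (\<integral>\<omega>. \<bar>B t \<omega>\<bar> ^ m \<partial>M))"
    using mom by (simp add: prob_space)
  also have "\<dots> \<le> 2 ^ m * (\<bar>a\<bar> ^ m + (1 + fact (2 * m)))"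
    using mom by (intro mult_left_mono add_left_mono) auto
  finally show "(\<integral>\<omega>. \<bar>a + X \<omega>\<bar> ^ m \<partial>M) \<le> 2 ^ m * (\<bar>a\<bar> ^ m + (1 + fact (2 * m)))" .
qed

context
  fixes M :: "'w measure" and J :: "'i set" and X :: "'i \<Rightarrow> 'w \<Rightarrow> real" and q :: "'i \<Rightarrow> real"
  assumes ps: "prob_space M" and J: "finite J"
    and X_measurable: "\<And>j. j \<in> J \<Longrightarrow> X j \<in> borel_measurable M"
    and X_integrable: "\<And>j m. j \<in> J \<Longrightarrow> integrable M (\<lambda>\<omega>. \<bar>X j \<omega>\<bar> ^ m)"
begin

lemma integrable_sqrt_sum_squares_power:
  "integrable M (\<lambda>\<omega>. sqrt (\<Sum>j\<in>J. (q j * X j \<omega>)\<^sup>2) ^ p)"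
proof -
  interpret prob_space M by (rule ps)
  let ?Y = "\<lambda>\<omega>. sqrt (\<Sum>j\<in>J. (q j * X j \<omega>)\<^sup>2)"
  let ?D = "\<lambda>\<omega>. (\<Sum>j\<in>J. (q j)\<^sup>2) powr (real (p + 2) / 2 - 1) * (\<Sum>j\<in>J. (q j)\<^sup>2 * \<bar>X j \<omega>\<bar> ^ (p + 2))"
  have "(\<lambda>\<omega>. \<Sum>j\<in>J. (q j * X j \<omega>)\<^sup>2) \<in> borel_measurable M"
    using X_measurable by (intro borel_measurable_sum) measurable
  then have [measurable]: "(\<lambda>\<omega>. ?Y \<omega> ^ p) \<in> borel_measurable M"
    by measurable
  have bound: "?Y \<omega> ^ p \<le> 1 + ?D \<omega>" for \<omega>
  proof -
    have "?Y \<omega> ^ p \<le> 1 + ?Y \<omega> ^ (p + 2)"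
      by (intro power_le_one_plus_power) (auto simp: sum_nonneg)
    also have "?Y \<omega> ^ (p + 2) \<le> ?D \<omega>"
      by (rule sqrt_sum_squares_power_le[OF J]) simp
    finally show ?thesis by simp
  qed
  have "integrable M (\<lambda>\<omega>. \<Sum>j\<in>J. (q j)\<^sup>2 * \<bar>X j \<omega>\<bar> ^ (p + 2))"
    by (intro Bochner_Integration.integrable_sum integrable_mult_right X_integrable)
  then have "integrable M (\<lambda>\<omega>. 1 + ?D \<omega>)"
    by (intro Bochner_Integration.integrable_add integrable_mult_right) auto
  then show ?thesis
  proof (rule Bochner_Integration.integrable_bound)
    show "AE \<omega> in M. norm (?Y \<omega> ^ p) \<le> norm (1 + ?D \<omega>)"
      using bound by (intro AE_I2) (auto simp: sum_nonneg intro: order.trans[OF _ abs_ge_self])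
  qed measurable
qed

lemma integral_sqrt_sum_squares_power_le:
  assumes p: "2 \<le> p" and D: "\<And>j. j \<in> J \<Longrightarrow> (\<integral>\<omega>. \<bar>X j \<omega>\<bar> ^ p \<partial>M) \<le> D"
  shows "(\<integral>\<omega>. sqrt (\<Sum>j\<in>J. (q j * X j \<omega>)\<^sup>2) ^ p \<partial>M) \<le> (\<Sum>j\<in>J. (q j)\<^sup>2) powr (real p / 2) * D"
proof -
  let ?S = "\<Sum>j\<in>J. (q j)\<^sup>2"
  have "(\<integral>\<omega>. sqrt (\<Sum>j\<in>J. (q j * X j \<omega>)\<^sup>2) ^ p \<partial>M)
      \<le> (\<integral>\<omega>. ?S powr (real p / 2 - 1) * (\<Sum>j\<in>J. (q j)\<^sup>2 * \<bar>X j \<omega>\<bar> ^ p) \<partial>M)"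
    using X_integrable
    by (intro integral_mono integrable_sqrt_sum_squares_power sqrt_sum_squares_power_le J p
        integrable_mult_right integrable_sum) auto
  also have "\<dots> = ?S powr (real p / 2 - 1) * (\<Sum>j\<in>J. (q j)\<^sup>2 * (\<integral>\<omega>. \<bar>X j \<omega>\<bar> ^ p \<partial>M))"
    using X_integrable by (simp add: integral_sum)
  also have "\<dots> \<le> ?S powr (real p / 2 - 1) * (\<Sum>j\<in>J. (q j)\<^sup>2 * D)"
    using D by (intro mult_left_mono sum_mono) auto
  also have "\<dots> = ?S * ?S powr (real p / 2 - 1) * D"
    unfolding sum_distrib_right[symmetric] by (simp only: mult_ac)
  also have "\<dots> = ?S powr (real p / 2) * D"
    using powr_mult_base[of ?S "real p / 2 - 1"] by (simp add: sum_nonneg)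
  finally show ?thesis .
qed

end

lemma summable_powr_of_growth:
  assumes c: "0 < c" and \<beta>: "0 < \<beta>" and \<alpha>\<beta>: "1 < 2 * \<alpha> * \<beta>"
    and growth: "\<forall>j\<ge>1. c * real j powr \<alpha> \<le> lam j"
  shows "summable (\<lambda>i. lam (Suc i) powr (- 2 * \<beta>))"
proof (rule summable_comparison_test)
  have "summable (\<lambda>i. real (Suc i) powr (- 2 * \<alpha> * \<beta>))"
    using \<alpha>\<beta> by (subst summable_Suc_iff) (simp add: summable_real_powr_iff)
  then show "summable (\<lambda>i. c powr (- 2 * \<beta>) * real (Suc i) powr (- 2 * \<alpha> * \<beta>))"
    by (rule summable_mult)
  have "lam (Suc i) powr (- 2 * \<beta>) \<le> (c * real (Suc i) powr \<alpha>) powr (- 2 * \<beta>)" for i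
    using growth c \<beta> by (intro powr_mono2') auto
  also have "(c * real (Suc i) powr \<alpha>) powr (- 2 * \<beta>) = c powr (- 2 * \<beta>) * real (Suc i) powr (- 2 * \<alpha> * \<beta>)" for i
    using c by (simp add: powr_mult powr_powr mult_ac)
  finally show "\<exists>N. \<forall>i\<ge>N. norm (lam (Suc i) powr (- 2 * \<beta>))
      \<le> c powr (- 2 * \<beta>) * real (Suc i) powr (- 2 * \<alpha> * \<beta>)"
    by auto
qed

lemma sum_sinc_quad_symbol_squares_le:
  assumes \<beta>: "0 < \<beta>" "\<beta> < 1" and k: "0 < k" "k \<le> 1" and lam_pos: "\<forall>j\<ge>1. 0 < lam j"
    and lam_le: "\<And>j. j \<in> {1..n} \<Longrightarrow> lam j \<le> lamh j"
    and summ: "summable (\<lambda>i. lam (Suc i) powr (- 2 * \<beta>))"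
  shows "(\<Sum>j=1..n. (sinc_quad_symbol \<beta> k (lamh j))\<^sup>2)
       \<le> (sinc_quad_const \<beta>)\<^sup>2 * (\<Sum>i. lam (Suc i) powr (- 2 * \<beta>))"
proof -
  have "(sinc_quad_symbol \<beta> k (lamh j))\<^sup>2 \<le> (sinc_quad_const \<beta>)\<^sup>2 * lam j powr (- 2 * \<beta>)"
    if j: "j \<in> {1..n}" for j
  proof -
    have pos: "0 < lam j" "0 < lamh j" using lam_pos lam_le[OF j] j by force+
    have "(sinc_quad_symbol \<beta> k (lamh j))\<^sup>2 \<le> (sinc_quad_const \<beta> * lamh j powr (- \<beta>))\<^sup>2"
      using sinc_quad_symbol_nonneg sinc_quad_symbol_le \<beta> k pos by (intro power_mono) auto
    also have "\<dots> = (sinc_quad_const \<beta>)\<^sup>2 * lamh j powr (- 2 * \<beta>)"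
      using pos by (simp add: power_mult_distrib power2_eq_square powr_add[symmetric])
    also have "\<dots> \<le> (sinc_quad_const \<beta>)\<^sup>2 * lam j powr (- 2 * \<beta>)"
      using pos lam_le[OF j] \<beta> by (intro mult_left_mono powr_mono2') auto
    finally show ?thesis .
  qed
  then have "(\<Sum>j=1..n. (sinc_quad_symbol \<beta> k (lamh j))\<^sup>2)
      \<le> (\<Sum>j=1..n. (sinc_quad_const \<beta>)\<^sup>2 * lam j powr (- 2 * \<beta>))"
    by (rule sum_mono)
  also have "\<dots> = (sinc_quad_const \<beta>)\<^sup>2 * (\<Sum>i<n. lam (Suc i) powr (- 2 * \<beta>))"
    by (simp add: sum_distrib_left sum.atLeast1_atMost_eq)
  also have "\<dots> \<le> (sinc_quad_const \<beta>)\<^sup>2 * (\<Sum>i. lam (Suc i) powr (- 2 * \<beta>))"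
    using summ by (intro mult_left_mono sum_le_suminf) auto
  finally show ?thesis .
qed

context
  fixes e u :: "nat \<Rightarrow> 'a::{real_inner, complete_space}" and lam lamh :: "nat \<Rightarrow> real" and n :: nat
    and M :: "'w measure" and B :: "nat \<Rightarrow> real \<Rightarrow> 'w \<Rightarrow> real" and \<beta> t :: real
  assumes e_orthonormal: "\<forall>i\<ge>1. \<forall>j\<ge>1. inner (e i) (e j) = (if i = j then 1 else 0)"
    and lam_pos: "\<forall>j\<ge>1. 0 < lam j"
    and summ: "summable (\<lambda>i. lam (Suc i) powr (- 2 * \<beta>))"
    and ps: "prob_space M" and BM: "\<forall>j\<ge>1. std_BM M (B j)" and t: "0 \<le> t" "t \<le> 1"
    and ons: "orthonormal_upto u n" and dom: "span (u ` {1..n}) \<subseteq> form_dom lam e"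
    and eig: "\<And>j. j \<in> {1..n} \<Longrightarrow> discrete_op (span (u ` {1..n})) lam e (u j) = lamh j *\<^sub>R u j"
begin

lemma norm_Y_tilde_power_eq:
  "norm (Y_tilde \<beta> lam e (span (u ` {1..n})) n u k B g t \<omega>) ^ p
     = sqrt (\<Sum>j=1..n. (sinc_quad_symbol \<beta> k (lamh j)
          * (inner g (u j) + lam j powr \<beta> * inner (W_beta \<beta> lam e B t \<omega>) (e j)))\<^sup>2) ^ p"
  using lam_pos by (subst norm_Y_tilde_eigenbasis[OF ons _ dom eig]) (auto intro: less_imp_le)

lemma Y_tilde_coordinate_moments:
  assumes j: "j \<in> {1..n}"
  shows "(\<lambda>\<omega>. inner g (u j) + lam j powr \<beta> * inner (W_beta \<beta> lam e B t \<omega>) (e j)) \<in> borel_measurable M"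
    and "integrable M (\<lambda>\<omega>. \<bar>inner g (u j) + lam j powr \<beta> * inner (W_beta \<beta> lam e B t \<omega>) (e j)\<bar> ^ m)"
    and "(\<integral>\<omega>. \<bar>inner g (u j) + lam j powr \<beta> * inner (W_beta \<beta> lam e B t \<omega>) (e j)\<bar> ^ m \<partial>M)
         \<le> 2 ^ m * (norm g ^ m + (1 + fact (2 * m)))"
proof -
  have j1: "1 \<le> j" using j by simp
  note W = W_beta_coordinate[OF e_orthonormal lam_pos ps BM t summ j1]
  show "(\<lambda>\<omega>. inner g (u j) + lam j powr \<beta> * inner (W_beta \<beta> lam e B t \<omega>) (e j)) \<in> borel_measurable M"
    using W(1) by (rule borel_measurable_add[OF borel_measurable_const])
  have BMj: "std_BM M (B j)" using BM j1 by simp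
  note mom = shifted_std_BM_abs_moment_le[OF BMj t W, of "inner g (u j)" m]
  show "integrable M (\<lambda>\<omega>. \<bar>inner g (u j) + lam j powr \<beta> * inner (W_beta \<beta> lam e B t \<omega>) (e j)\<bar> ^ m)"
    by (fact mom(1))
  have "norm (u j) = 1" using ons j unfolding orthonormal_upto_def by (simp add: norm_eq_sqrt_inner)
  then have "\<bar>inner g (u j)\<bar> \<le> norm g" using Cauchy_Schwarz_ineq2[of g "u j"] by simp
  then have "2 ^ m * (\<bar>inner g (u j)\<bar> ^ m + (1 + fact (2 * m))) \<le> 2 ^ m * (norm g ^ m + (1 + fact (2 * m)))"
    by (intro mult_left_mono add_right_mono power_mono) auto
  with mom(2) show "(\<integral>\<omega>. \<bar>inner g (u j) + lam j powr \<beta> * inner (W_beta \<beta> lam e B t \<omega>) (e j)\<bar> ^ m \<partial>M)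
      \<le> 2 ^ m * (norm g ^ m + (1 + fact (2 * m)))" by linarith
qed

lemma integrable_norm_Y_tilde_power:
  "integrable M (\<lambda>\<omega>. norm (Y_tilde \<beta> lam e (span (u ` {1..n})) n u k B g t \<omega>) ^ p)"
  unfolding norm_Y_tilde_power_eq
  by (rule integrable_sqrt_sum_squares_power[OF ps finite_atLeastAtMost
        Y_tilde_coordinate_moments(1) Y_tilde_coordinate_moments(2)])

lemma integral_norm_Y_tilde_power_le:
  assumes "0 < \<beta>" "\<beta> < 1" "0 < k" "k \<le> 1" "2 \<le> p"
    and lam_le: "\<And>j. j \<in> {1..n} \<Longrightarrow> lam j \<le> lamh j"
  shows "(\<integral>\<omega>. norm (Y_tilde \<beta> lam e (span (u ` {1..n})) n u k B g t \<omega>) ^ p \<partial>M)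
       \<le> ((sinc_quad_const \<beta>)\<^sup>2 * (\<Sum>i. lam (Suc i) powr (- 2 * \<beta>))) powr (real p / 2)
          * (2 ^ p * (norm g ^ p + (1 + fact (2 * p))))"
proof -
  have "(\<integral>\<omega>. norm (Y_tilde \<beta> lam e (span (u ` {1..n})) n u k B g t \<omega>) ^ p \<partial>M)
      \<le> (\<Sum>j=1..n. (sinc_quad_symbol \<beta> k (lamh j))\<^sup>2) powr (real p / 2)
          * (2 ^ p * (norm g ^ p + (1 + fact (2 * p))))"
    unfolding norm_Y_tilde_power_eq
    by (rule integral_sqrt_sum_squares_power_le[OF ps finite_atLeastAtMost
          Y_tilde_coordinate_moments(1) Y_tilde_coordinate_moments(2) \<open>2 \<le> p\<close>
          Y_tilde_coordinate_moments(3)])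
  also have "\<dots> \<le> ((sinc_quad_const \<beta>)\<^sup>2 * (\<Sum>i. lam (Suc i) powr (- 2 * \<beta>))) powr (real p / 2)
          * (2 ^ p * (norm g ^ p + (1 + fact (2 * p))))"
    using sum_sinc_quad_symbol_squares_le[OF assms(1-4) lam_pos lam_le summ]
    by (intro mult_right_mono powr_mono2) (auto simp: sum_nonneg)
  finally show ?thesis .
qed

end

theorem lemma3p10:
  fixes e :: "nat \<Rightarrow> 'a::{real_inner, complete_space}"
    and lam :: "nat \<Rightarrow> real"
    and \<alpha> c_lam C_lam \<beta> :: real
    and V :: "real \<Rightarrow> 'a set" and N :: "real \<Rightarrow> nat"
    and eh :: "real \<Rightarrow> nat \<Rightarrow> 'a" and lamh :: "real \<Rightarrow> nat \<Rightarrow> real"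
    and M :: "'w measure" and B :: "nat \<Rightarrow> real \<Rightarrow> 'w \<Rightarrow> real"
    and d :: nat and C1 C2 h0 r s q :: real
    and p :: nat and t :: real and g :: 'a
  assumes e_orthonormal: "\<forall>i\<ge>1. \<forall>j\<ge>1. inner (e i) (e j) = (if i = j then 1 else 0)"
    and e_complete: "closure (span (e ` {1..})) = UNIV"
    and lam_mono: "\<forall>i\<ge>1. \<forall>j\<ge>i. lam i \<le> lam j"
    and alpha_pos: "\<alpha> > 0" and c_lam_pos: "c_lam > 0" and C_lam_pos: "C_lam > 0"
    and lam_growth: "\<forall>j\<ge>1. c_lam * real j powr \<alpha> \<le> lam j \<and> lam j \<le> C_lam * real j powr \<alpha>"
    and beta: "0 < \<beta>" "\<beta> < 1"
    and Vh_span: "\<forall>h\<in>{0<..<1}. V h = span (eh h ` {1..N h})"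
    and Vh_dom: "\<forall>h\<in>{0<..<1}. V h \<subseteq> form_dom lam e"
    and eh_orthonormal: "\<forall>h\<in>{0<..<1}. \<forall>i\<in>{1..N h}. \<forall>j\<in>{1..N h}.
                           inner (eh h i) (eh h j) = (if i = j then 1 else 0)"
    and eh_eigen: "\<forall>h\<in>{0<..<1}. \<forall>j\<in>{1..N h}.
                     discrete_op (V h) lam e (eh h j) = lamh h j *\<^sub>R eh h j"
    and lamh_mono: "\<forall>h\<in>{0<..<1}. \<forall>i\<in>{1..N h}. \<forall>j\<in>{i..N h}. lamh h i \<le> lamh h j"
    and BM: "prob_space M" "\<forall>j\<ge>1. std_BM M (B j)"
    and BM_indep: "prob_space.indep_vars M (\<lambda>_. PiM {0..} (\<lambda>_. borel))
                     (\<lambda>j \<omega>. (\<lambda>s\<in>{0::real..}. B j s \<omega>)) {1..}"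
    and cond_i: "d \<ge> 1" "\<exists>c0 c1. 0 < c0 \<and> 0 < c1 \<and> (\<forall>h\<in>{0<..<1}.
                     c0 * h powr (- real d) \<le> real (N h) \<and> real (N h) \<le> c1 * h powr (- real d))"
    and cond_ii: "C1 > 0" "C2 > 0" "0 < h0" "h0 < 1" "r > 0" "s > 0" "q > 1"
      "\<forall>h\<in>{0<..<h0}. \<forall>j\<in>{1..N h}.
          lam j \<le> lamh h j \<and> lamh h j \<le> lam j + C1 * h powr r * lam j powr q
          \<and> (norm (e j - eh h j))\<^sup>2 \<le> C2 * h powr (2 * s) * lam j powr q"
    and cond_iii: "1 / (2 * \<beta>) < \<alpha>" "\<alpha> \<le> min (r / ((q - 1) * real d)) (2 * s / (q * real d))"
    and t_range: "t \<in> {0..1}"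
  shows "(\<forall>h\<in>{0<..<1}. \<forall>k>0.
            integrable M (\<lambda>\<omega>. norm (Y_tilde \<beta> lam e (V h) (N h) (eh h) k B g t \<omega>) ^ p))
       \<and> (p \<ge> 2 \<longrightarrow>
          (\<exists>k0 > 0. \<exists>C > 0. \<exists>h1 \<in> {0<..h0}. \<forall>h\<in>{0<..<h1}. \<forall>k\<in>{0<..<k0}.
             integral\<^sup>L M (\<lambda>\<omega>. norm (Y_tilde \<beta> lam e (V h) (N h) (eh h) k B g t \<omega>) ^ p)
             \<le> C * (1 + exp (- real p * pi\<^sup>2 / (2 * k)) * h powr (- real p * real d / 2)
                      + norm g ^ p)))"
proof -
  have lam_pos: "\<forall>j\<ge>1. 0 < lam j"
    using lam_growth c_lam_pos by (auto intro: less_le_trans[rotated])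
  have summ: "summable (\<lambda>i. lam (Suc i) powr (- 2 * \<beta>))"
    using cond_iii(1) beta lam_growth
    by (intro summable_powr_of_growth[OF c_lam_pos beta(1)]) (auto simp: field_simps)
  have t: "0 \<le> t" "t \<le> 1" using t_range by auto
  have eigenbasis: "orthonormal_upto (eh h) (N h)" "span (eh h ` {1..N h}) \<subseteq> form_dom lam e"
    "\<And>j. j \<in> {1..N h} \<Longrightarrow> discrete_op (span (eh h ` {1..N h})) lam e (eh h j) = lamh h j *\<^sub>R eh h j"
    "V h = span (eh h ` {1..N h})" if "h \<in> {0<..<1}" for h
    using that Vh_span Vh_dom eh_orthonormal eh_eigen unfolding orthonormal_upto_def by auto
  note Y_tilde_moments = integrable_norm_Y_tilde_power integral_norm_Y_tilde_power_le
  note Y_tilde_moments = Y_tilde_moments[OF e_orthonormal lam_pos summ BM t eigenbasis(1-3)]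
  define A where "A = ((sinc_quad_const \<beta>)\<^sup>2 * (\<Sum>i. lam (Suc i) powr (- 2 * \<beta>))) powr (real p / 2) * 2 ^ p"
  have A: "0 \<le> A" unfolding A_def by simp
  have "integral\<^sup>L M (\<lambda>\<omega>. norm (Y_tilde \<beta> lam e (V h) (N h) (eh h) k B g t \<omega>) ^ p)
      \<le> (A * (1 + fact (2 * p)) + 1) * (1 + exp (- real p * pi\<^sup>2 / (2 * k)) * h powr (- real p * real d / 2)
           + norm g ^ p)"
    if "2 \<le> p" "h \<in> {0<..<h0}" "k \<in> {0<..<1}" for h k
  proof -
    have h: "h \<in> {0<..<1}" using that(2) cond_ii(4) by auto
    have "integral\<^sup>L M (\<lambda>\<omega>. norm (Y_tilde \<beta> lam e (V h) (N h) (eh h) k B g t \<omega>) ^ p)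
        \<le> A * (norm g ^ p + (1 + fact (2 * p)))"
      unfolding eigenbasis(4)[OF h] A_def mult.assoc
      using that h cond_ii(8) beta by (intro Y_tilde_moments(2)[OF h]) auto
    also have "\<dots> \<le> (A * (1 + fact (2 * p)) + 1) * (1 + norm g ^ p)"
      using A by (simp add: algebra_simps)
    also have "\<dots> \<le> (A * (1 + fact (2 * p)) + 1)
        * (1 + exp (- real p * pi\<^sup>2 / (2 * k)) * h powr (- real p * real d / 2) + norm g ^ p)"
      using A by (intro mult_left_mono) auto
    finally show ?thesis .
  qed
  moreover have "integrable M (\<lambda>\<omega>. norm (Y_tilde \<beta> lam e (V h) (N h) (eh h) k B g t \<omega>) ^ p)"
    if "h \<in> {0<..<1}" for h k
    unfolding eigenbasis(4)[OF that] by (rule Y_tilde_moments(1)) (use that in simp_all)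
  ultimately show ?thesis
    using A cond_ii(3)
    by (intro conjI ballI allI impI exI[of _ 1] exI[of _ "A * (1 + fact (2 * p)) + 1"] bexI[of _ h0])
      (auto simp: add_nonneg_pos)
qed

end
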